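(* Let $c,d>0$, $r\in(0,1)$ and $m\in\mathbb{Z}$. Then for every $x\in\mathbb{C}\setminus[-d,c]$, $$\lim_{p\to\infty}\frac{\hat P_{p+m}(x;0,0,c,d;r^{1/p})}{\hat P_p(x;0,0,c,d;r^{1/p})}=\big(cdr(1-r)\big)^{m/2}\rho^m\!\left(\frac{x-r(c-d)}{2\sqrt{rcd(1-r)}}\right),$$ where $\rho(y)=y+\sqrt{y^2-1}$ with the branch of the square root chosen so that $|\rho(y)|>1$ for $y\notin[-1,1]$.
   Context: For base $q\in(0,1)$, the monic polynomials $\hat P_n(x;0,0,c,d;q)$ are defined by $\hat P_{-1}=0$, $\hat P_0=1$, $x\hat P_n=\hat P_{n+1}+q^n(c-d)\hat P_n+q^{n-1}cd(1-q^n)\hat P_{n-1}$. *)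

theory Defs
  imports "HOL-Analysis.Analysis"
begin

text \<open>Pair of consecutive monic polynomials (P_n, P_{n+1}) evaluated at x, for
  parameters c, d and base q, following
  x P_n = P_{n+1} + q^n (c-d) P_n + q^(n-1) c d (1-q^n) P_{n-1},  P_{-1}=0, P_0=1.\<close>
fun Ppair :: "real \<Rightarrow> real \<Rightarrow> real \<Rightarrow> complex \<Rightarrow> nat \<Rightarrow> complex \<times> complex" where
  "Ppair c d q x 0 = (1, x - of_real (c - d))"
| "Ppair c d q x (Suc n) =
     (let (a, b) = Ppair c d q x n in
      (b, (x - of_real (q ^ Suc n * (c - d))) * b
           - of_real (q ^ n * c * d * (1 - q ^ Suc n)) * a))"

text \<open>Phat c d q x n = \<hat>P_n(x;0,0,c,d;q).\<close>
definition Phat :: "real \<Rightarrow> real \<Rightarrow> real \<Rightarrow> complex \<Rightarrow> nat \<Rightarrow> complex" where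
  "Phat c d q x n = fst (Ppair c d q x n)"

definition rho :: "complex \<Rightarrow> complex" where
  "rho y = (THE w. \<exists>s. s\<^sup>2 = y\<^sup>2 - 1 \<and> w = y + s \<and> cmod w > 1)"

end

(* Writing w_n = P_(n+1) / P_n turns the recurrence into the continued fraction
   w_n = X_n - B_n / w_(n-1), with X_n = x - q^n (c - d) and B_n = q^(n-1) c d (1 - q^n).
   If u, v are the roots of z^2 - X_n z + B_n, then x = u + v + q^n (c - d) lies within
   |u| - |v| of the segment q^n (c - d) + [-2 sqrt B_n, 2 sqrt B_n], which for q close to 1 is
   contained in [-d - g, c + g]; if x keeps distance g from that interval, the roots are
   separated in modulus by g, uniformly in n.  The coefficients move by O(1 - q) per step, hence
   so does the dominant root U_n, and the contraction of w |-> X_n - B_n / w near U_n keeps w_n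
   within O(1 - q) of U_n.  For q = r^(1/p) and n = p + j we have q^n -> r, so w_(p+j) tends to
   the dominant root U of z^2 - (x - r (c - d)) z + r (1 - r) c d, and P_(p+m) / P_p, a product of
   |m| consecutive ratios or the inverse of one, tends to U^m.  Finally
   U = sqrt (r c d (1 - r)) * rho ((x - r (c - d)) / (2 sqrt (r c d (1 - r)))). *)

theory Submission
  imports Defs
begin

definition dominant_root :: "complex \<Rightarrow> complex \<Rightarrow> complex" where
  "dominant_root X B = (if cmod (X - csqrt (X^2 - 4*B)) \<le> cmod (X + csqrt (X^2 - 4*B))
     then (X + csqrt (X^2 - 4*B)) / 2 else (X - csqrt (X^2 - 4*B)) / 2)"

lemma dominant_root_mult: "dominant_root X B * (X - dominant_root X B) = B"
proof -
  define s where "s = csqrt (X^2 - 4*B)"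
  have "s^2 = X^2 - 4*B" by (simp add: s_def)
  then have "(X + s)/2 * (X - (X + s)/2) = B" "(X - s)/2 * (X - (X - s)/2) = B"
    by (simp_all add: field_simps power2_eq_square)
  then show ?thesis unfolding dominant_root_def s_def[symmetric] by simp
qed

lemma norm_dominant_root_ge: "cmod (X - dominant_root X B) \<le> cmod (dominant_root X B)"
proof -
  define s where "s = csqrt (X^2 - 4*B)"
  have halves: "X - (X + s)/2 = (X - s)/2" "X - (X - s)/2 = (X + s)/2" by (simp_all add: field_simps)
  show ?thesis unfolding dominant_root_def s_def[symmetric]
    by (simp only: halves if_distrib[of "\<lambda>z. X - z"]) (simp add: norm_divide)
qed

text \<open>Writing \<open>u = \<rho> e\<close> with \<open>|e| = 1\<close>, the witness is \<open>t = \<surd>B (e + cnj e)\<close>.\<close>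
lemma sum_of_roots_near_segment:
  fixes u v :: complex and B :: real
  assumes uv: "u * v = of_real B" and B: "0 \<le> B" and le: "cmod v \<le> cmod u"
  shows "\<exists>t::real. t^2 \<le> 4*B \<and> cmod (u + v - of_real t) \<le> cmod u - cmod v"
proof (cases "u = 0")
  case True
  then show ?thesis using le B by (intro exI[of _ 0]) simp
next
  case False
  define \<rho> where "\<rho> = cmod u"
  define \<beta> where "\<beta> = sqrt B"
  define e where "e = u / of_real \<rho>"
  have \<rho>: "0 < \<rho>" using False by (simp add: \<rho>_def)
  have \<beta>: "0 \<le> \<beta>" "\<beta>^2 = B" using B by (simp_all add: \<beta>_def)
  have e: "cmod e = 1" "u = of_real \<rho> * e" using \<rho> by (simp_all add: e_def \<rho>_def norm_divide)
  have v: "v = of_real (\<beta>^2 / \<rho>) * cnj e"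
  proof -
    have "v = of_real B / u" using uv False by (simp add: field_simps)
    also have "\<dots> = of_real B * cnj u / of_real (\<rho>^2)" unfolding \<rho>_def by (rule complex_div_cnj)
    finally show ?thesis using \<rho> \<beta> by (simp add: e_def field_simps power2_eq_square)
  qed
  have norm_v: "cmod v = \<beta>^2 / \<rho>" using v e \<rho> by (simp add: norm_mult norm_divide norm_power)
  have "\<beta>^2 \<le> \<rho>^2" using le norm_v \<rho> by (simp add: \<rho>_def[symmetric] field_simps power2_eq_square)
  then have "\<beta> \<le> \<rho>" using \<rho> by (auto intro: power2_le_imp_le)
  define t where "t = 2 * \<beta> * Re e"
  have "(Re e)^2 \<le> 1" using abs_Re_le_cmod[of e] e by (simp add: abs_square_le_1)
  moreover have "t^2 = 4*B * (Re e)^2" by (simp add: t_def power_mult_distrib flip: \<beta>(2))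
  ultimately have "t^2 \<le> 4*B" using B mult_left_le[of "(Re e)^2" "4*B"] by simp
  have "of_real t = of_real \<beta> * (e + cnj e)" by (simp add: t_def complex_add_cnj)
  then have "u + v - of_real t = of_real (\<rho> - \<beta>) * e - of_real (\<beta> * (\<rho> - \<beta>) / \<rho>) * cnj e"
    using e v \<rho> by (simp add: field_simps power2_eq_square)
  then have "cmod (u + v - of_real t)
      \<le> cmod (of_real (\<rho> - \<beta>) * e) + cmod (of_real (\<beta> * (\<rho> - \<beta>) / \<rho>) * cnj e)"
    by (simp only: norm_triangle_ineq4)
  also have "\<dots> = (\<rho> - \<beta>) + \<beta> * (\<rho> - \<beta>) / \<rho>"
    unfolding norm_mult norm_of_real complex_mod_cnj e(1) using \<open>\<beta> \<le> \<rho>\<close> \<beta> \<rho> by simp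
  also have "\<dots> = cmod u - cmod v" using norm_v \<rho> by (simp add: \<rho>_def[symmetric] field_simps power2_eq_square)
  finally show ?thesis using \<open>t^2 \<le> 4*B\<close> by blast
qed

lemma shifted_segment_within:
  fixes c d g s \<beta> t :: real
  assumes "0 < c" "0 < d" "0 \<le> g" "0 \<le> s" "s \<le> 1" "1 \<le> \<beta>" "(\<beta> - 1) * c * d \<le> g^2"
    and t: "t^2 \<le> 4 * (\<beta> * s * (1 - s) * c * d)"
  shows "s * (c - d) + t \<in> {-d - g..c + g}"
proof -
  define A where "A = (1 - s) * c + s * d"
  define C where "C = s * c + (1 - s) * d"
  have "0 \<le> A" "0 \<le> C" using assms by (simp_all add: A_def C_def)
  have "0 \<le> (2 * s - 1)^2" by simp
  then have "4 * s * (1 - s) \<le> 1" by (simp add: power2_eq_square algebra_simps)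
  then have "4 * (\<beta> - 1) * c * d * (s * (1 - s)) \<le> (\<beta> - 1) * c * d"
    using assms mult_left_le[of "4 * (s * (1 - s))" "(\<beta> - 1) * c * d"] by (simp add: algebra_simps)
  then have "t^2 \<le> 4 * s * (1 - s) * c * d + g^2" using t assms by (simp add: algebra_simps)
  txt \<open>AM-GM for the two weighted means \<open>A\<close> and \<open>C\<close> of \<open>c\<close> and \<open>d\<close>:\<close>
  moreover have "A^2 - 4 * s * (1 - s) * c * d = ((1 - s) * c - s * d)^2"
    "C^2 - 4 * s * (1 - s) * c * d = (s * c - (1 - s) * d)^2"
    by (simp_all add: A_def C_def power2_eq_square algebra_simps)
  then have "4 * s * (1 - s) * c * d \<le> A^2" "4 * s * (1 - s) * c * d \<le> C^2"
    by (metis diff_ge_0_iff_ge zero_le_power2)+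
  moreover have "A^2 + g^2 \<le> (A + g)^2" "C^2 + g^2 \<le> (C + g)^2"
    using \<open>0 \<le> A\<close> \<open>0 \<le> C\<close> \<open>0 \<le> g\<close> by (simp_all add: power2_sum)
  ultimately have "t^2 \<le> (A + g)^2" "t^2 \<le> (C + g)^2" by linarith+
  then have "\<bar>t\<bar> \<le> A + g" "\<bar>t\<bar> \<le> C + g"
    using \<open>0 \<le> A\<close> \<open>0 \<le> C\<close> \<open>0 \<le> g\<close> by (simp_all add: power2_le_iff_abs_le)
  then show ?thesis by (auto simp: A_def C_def algebra_simps abs_le_iff)
qed

locale separated =
  fixes c d :: real and x :: complex and g :: real
  assumes c_pos: "0 < c" and d_pos: "0 < d" and g_pos: "0 < g"
    and far_from_segment: "\<forall>y\<in>{-d - g..c + g}. g \<le> cmod (x - of_real y)"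

lemma (in separated) root_gap:
  assumes "0 \<le> s" "s \<le> 1" "1 \<le> \<beta>" "(\<beta> - 1) * c * d \<le> g^2"
    and uv: "u * v = of_real (\<beta> * s * (1 - s) * c * d)" "u + v = x - of_real (s * (c - d))" "cmod v \<le> cmod u"
  shows "g \<le> cmod u - cmod v"
proof -
  have "0 \<le> \<beta> * s * (1 - s) * c * d" using assms c_pos d_pos by simp
  then obtain t where t: "t^2 \<le> 4*(\<beta> * s * (1 - s) * c * d)" "cmod (u + v - of_real t) \<le> cmod u - cmod v"
    using sum_of_roots_near_segment[OF uv(1)] uv(3) by blast
  have "s * (c - d) + t \<in> {-d - g..c + g}"
    using shifted_segment_within[OF c_pos d_pos _ assms(1-4)] t(1) g_pos by (simp add: ac_simps)
  then have "g \<le> cmod (x - of_real (s * (c - d) + t))" using far_from_segment by blast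
  also have "x - of_real (s * (c - d) + t) = u + v - of_real t" using uv(2) by simp
  finally show ?thesis using t(2) by linarith
qed

lemma norm_diff_roots_mult_le:
  fixes u v u' v' X X' :: complex and B B' :: real
  assumes "u + v = X" "u * v = of_real B" "u' + v' = X'" "u' * v' = of_real B'"
  shows "cmod (u' - u) * cmod (u' - v) \<le> cmod (X - X') * cmod u' + \<bar>B - B'\<bar>"
proof -
  have "(u' - u) * (u' - v) = u'^2 - (u + v) * u' + u * v"
    by (simp add: algebra_simps power2_eq_square)
  moreover have "u'^2 - (u' + v') * u' + u' * v' = 0"
    by (simp add: algebra_simps power2_eq_square)
  ultimately have "(u' - u) * (u' - v) = (X' - X) * u' + of_real (B - B')"
    using assms by (simp add: algebra_simps)
  then have "cmod (u' - u) * cmod (u' - v) = cmod ((X' - X) * u' + of_real (B - B'))"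
    by (simp flip: norm_mult)
  also have "\<dots> \<le> cmod (X - X') * cmod u' + \<bar>B - B'\<bar>"
    using norm_triangle_ineq[of "(X' - X) * u'" "of_real (B - B')"]
    by (simp add: norm_mult norm_minus_commute flip: of_real_diff)
  finally show ?thesis .
qed

text \<open>The product \<open>(u' - u) (u' - v)\<close> is small, and the gap keeps \<open>u'\<close> away from \<open>v\<close>.\<close>
lemma norm_diff_larger_roots_le:
  fixes u v u' v' X X' :: complex and B B' :: real
  assumes roots: "u + v = X" "u * v = of_real B" "u' + v' = X'" "u' * v' = of_real B'"
    and gap: "0 < g" "g \<le> cmod u - cmod v" "g \<le> cmod u' - cmod v'"
    and dX: "cmod (X - X') \<le> g/4"
    and \<epsilon>: "cmod (X - X') * cmod u' + \<bar>B - B'\<bar> \<le> \<epsilon>" "\<epsilon> \<le> g^2/8"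
  shows "cmod (u - u') \<le> 2*\<epsilon>/g"
proof -
  define a where "a = cmod (u' - u)"
  define b where "b = cmod (u' - v)"
  have "a * b \<le> \<epsilon>" using norm_diff_roots_mult_le[OF roots] \<epsilon>(1) by (simp add: a_def b_def)
  have "g \<le> a + b"
  proof -
    have "cmod (u - v) \<le> a + b" unfolding a_def b_def
      using norm_triangle_ineq4[of "u' - v" "u' - u"] by simp
    then show ?thesis using gap norm_triangle_ineq2[of u v] by linarith
  qed
  have "0 \<le> a" "0 \<le> b" by (simp_all add: a_def b_def)
  show ?thesis
  proof (cases "g/2 \<le> b")
    case True
    then have "a * (g/2) \<le> \<epsilon>" using \<open>a * b \<le> \<epsilon>\<close> \<open>0 \<le> a\<close>
      by (meson mult_left_mono order_trans)
    then show ?thesis using gap by (simp add: a_def norm_minus_commute field_simps)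
  next
    case False
    txt \<open>Then \<open>u'\<close> is close to \<open>v\<close>, hence \<open>v'\<close> close to \<open>u\<close>: incompatible with the gaps.\<close>
    then have "g/2 \<le> a" using \<open>g \<le> a + b\<close> by linarith
    then have "(g/2) * b \<le> \<epsilon>" using \<open>a * b \<le> \<epsilon>\<close> \<open>0 \<le> b\<close>
      by (meson mult_right_mono order_trans)
    then have "b \<le> 2*\<epsilon>/g" using gap by (simp add: field_simps)
    also have "\<dots> \<le> g/4" using \<epsilon> gap by (simp add: field_simps power2_eq_square)
    finally have "b \<le> g/4" .
    have u'_le: "cmod u' \<le> cmod v + b" unfolding b_def
      using norm_triangle_ineq[of v "u' - v"] by simp
    have "v' - u = (X' - X) - (u' - v)" using roots(1,3) by (auto simp: algebra_simps)
    then have "cmod (v' - u) \<le> cmod (X - X') + b" unfolding b_def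
      using norm_triangle_ineq4[of "X' - X" "u' - v"] by (simp add: norm_minus_commute)
    then have "cmod u \<le> cmod v' + cmod (X - X') + b"
      using norm_triangle_ineq4[of v' "v' - u"] by simp
    then show ?thesis using u'_le gap dX \<open>b \<le> g/4\<close> by linarith
  qed
qed

lemma norm_root_le:
  fixes u v X :: complex
  assumes "u + v = X" "u * v = of_real B" "0 \<le> B" "0 < g" "g \<le> cmod u"
  shows "cmod u \<le> cmod X + B/g"
proof -
  have "cmod u * cmod v = B" using assms(2,3) by (metis norm_mult norm_of_real abs_of_nonneg)
  moreover have "0 < cmod u" using assms(4,5) by linarith
  ultimately have "cmod v = B / cmod u" using assms(4,5) by (simp add: field_simps)
  also have "\<dots> \<le> B / g" using assms(3-5) by (simp add: frac_le)
  finally have "cmod v \<le> B / g" .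
  moreover have "cmod u \<le> cmod X + cmod v"
    using norm_triangle_ineq4[of X v] by (simp add: assms(1)[symmetric])
  ultimately show ?thesis by linarith
qed

text \<open>The map \<open>w \<mapsto> X - B/w\<close> fixes \<open>U\<close> and satisfies \<open>X - B/w - U = V (w - U) / w\<close>.\<close>
lemma continued_fraction_step:
  fixes U V X w :: complex
  assumes roots: "U + V = X" "U * V = of_real B"
    and gap: "g \<le> cmod U - cmod V" and near: "cmod (w - U) \<le> E" "E < g"
  shows "cmod (X - of_real B / w - U) \<le> (cmod U - g) * E / (cmod U - E)"
proof -
  have U_ge: "g \<le> cmod U" using gap norm_ge_zero[of V] by linarith
  have w_ge: "cmod U - E \<le> cmod w"
    using near norm_triangle_ineq2[of U "U - w"] by (simp add: norm_minus_commute)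
  then have "w \<noteq> 0" using U_ge near by auto
  then have "X - of_real B / w - U = V * (w - U) / w" using roots by (auto simp: field_simps)
  then have "cmod (X - of_real B / w - U) = cmod V * cmod (w - U) / cmod w"
    by (simp add: norm_mult norm_divide)
  also have "\<dots> \<le> (cmod U - g) * E / (cmod U - E)"
  proof -
    have "cmod V * cmod (w - U) \<le> (cmod U - g) * E"
      using gap near U_ge by (intro mult_mono) auto
    moreover have "0 \<le> E" using near(1) norm_ge_zero order_trans by blast
    then have "0 < cmod U - E" "0 \<le> (cmod U - g) * E" using U_ge near by simp_all
    ultimately show ?thesis using w_ge frac_le by blast
  qed
  finally show ?thesis .
qed

text \<open>The contraction of \<open>continued_fraction_step\<close> absorbs a drift of at most \<open>\<Delta>\<close> per step
  of the roots \<open>U n\<close>.\<close>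
lemma continued_fraction_tracks_root:
  fixes X U V w :: "nat \<Rightarrow> complex" and B :: "nat \<Rightarrow> real"
  assumes roots: "\<And>n. U n + V n = X n" "\<And>n. U n * V n = of_real (B n)"
    and gap: "\<And>n. g \<le> cmod (U n) - cmod (V n)" "0 < g" and bound: "\<And>n. cmod (U n) \<le> M"
    and drift: "\<And>n. cmod (U n - U (Suc n)) \<le> \<Delta>" "0 \<le> \<Delta>" "\<Delta> \<le> g/4" "(2*M/g)*\<Delta> \<le> g/4"
    and w_0: "w 0 = U 0" and w_Suc: "\<And>n. w (Suc n) = X (Suc n) - of_real (B (Suc n)) / w n"
  shows "cmod (w n - U n) \<le> (2*M/g)*\<Delta>"
proof (induction n)
  case 0
  have "0 \<le> M" using bound[of 0] norm_ge_zero[of "U 0"] by linarith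
  then show ?case using w_0 drift gap by simp
next
  case (Suc n)
  define K where "K = 2*M/g"
  define E where "E = (K + 1)*\<Delta>"
  let ?U = "U (Suc n)"
  have "K*\<Delta> \<le> g/4" using drift(4) by (simp add: K_def)
  then have E_le: "E \<le> g/2" using drift by (simp add: E_def algebra_simps)
  have U_ge: "g \<le> cmod ?U" using gap(1)[of "Suc n"] norm_ge_zero[of "V (Suc n)"] by linarith
  have "cmod (w n - ?U) \<le> E"
    using norm_triangle_ineq[of "w n - U n" "U n - ?U"] Suc drift(1)[of n]
    by (simp add: E_def K_def algebra_simps)
  then have "cmod (w (Suc n) - ?U) \<le> (cmod ?U - g) * E / (cmod ?U - E)"
    unfolding w_Suc using E_le gap roots by (intro continued_fraction_step) auto
  also have "\<dots> \<le> K * \<Delta>"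
  proof -
    have "0 \<le> E" using \<open>cmod (w n - ?U) \<le> E\<close> norm_ge_zero order_trans by blast
    then have "E * E \<le> E * (g/2)" using E_le by (intro mult_left_mono) auto
    also have "E * (g/2) = M*\<Delta> + g*\<Delta>/2" using gap by (simp add: E_def K_def field_simps)
    finally have "E * E \<le> M*\<Delta> + g*\<Delta>/2" .
    moreover have "\<Delta> * cmod ?U \<le> \<Delta> * M" using bound drift by (intro mult_left_mono) auto
    moreover have "g * E = 2*M*\<Delta> + g*\<Delta>" using gap by (simp add: E_def K_def field_simps)
    moreover have "0 \<le> \<Delta> * E" "0 \<le> g * \<Delta>" using drift \<open>0 \<le> E\<close> gap by simp_all
    ultimately have "\<Delta> * cmod ?U + E * E \<le> g * E + \<Delta> * E" by (simp add: algebra_simps)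
    moreover have KD: "K * \<Delta> = E - \<Delta>" by (simp add: E_def algebra_simps)
    ultimately have "(cmod ?U - g) * E \<le> K * \<Delta> * (cmod ?U - E)"
      unfolding KD by (simp add: algebra_simps)
    moreover have "0 < cmod ?U - E" using U_ge E_le gap by linarith
    ultimately show ?thesis by (simp add: divide_le_eq)
  qed
  finally show ?case by (simp add: K_def)
qed

lemma shift_eq_prod_mult:
  assumes "\<And>n. f (Suc n) = w n * f n"
  shows "f (n + k) = (\<Prod>i<k. w (n + i)) * f n"
  by (induction k) (simp_all add: assms ac_simps)

lemma tendsto_ratio_shift_power:
  fixes F W :: "nat \<Rightarrow> nat \<Rightarrow> 'a::real_normed_field"
  assumes step: "\<forall>\<^sub>F p in sequentially. \<forall>n. F p (Suc n) = W p n * F p n \<and> F p n \<noteq> 0"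
    and lim: "\<And>i. ((\<lambda>p. W p (n p + i)) \<longlongrightarrow> U) sequentially"
  shows "((\<lambda>p. F p (n p + k) / F p (n p)) \<longlongrightarrow> U ^ k) sequentially"
proof -
  have "\<forall>\<^sub>F p in sequentially. (\<Prod>i<k. W p (n p + i)) = F p (n p + k) / F p (n p)"
    using step
  proof eventually_elim
    case (elim p)
    then have "F p (n p + k) = (\<Prod>i<k. W p (n p + i)) * F p (n p)" "F p (n p) \<noteq> 0"
      using shift_eq_prod_mult[of "F p"] by blast+
    then show ?case by simp
  qed
  moreover have "((\<lambda>p. \<Prod>i<k. W p (n p + i)) \<longlongrightarrow> (\<Prod>i<k. U)) sequentially"
    by (intro tendsto_prod lim)
  ultimately show ?thesis by (simp add: Lim_transform_eventually)
qed

lemma tendsto_shift_ratio_powi: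
  fixes F W :: "nat \<Rightarrow> nat \<Rightarrow> 'a::real_normed_field"
  assumes step: "\<forall>\<^sub>F p in sequentially. \<forall>n. F p (Suc n) = W p n * F p n \<and> F p n \<noteq> 0"
    and lim: "\<And>j. ((\<lambda>p. W p (nat (int p + j))) \<longlongrightarrow> U) sequentially" and "U \<noteq> 0"
  shows "((\<lambda>p. F p (nat (int p + m)) / F p p) \<longlongrightarrow> U powi m) sequentially"
proof (cases "0 \<le> m")
  case True
  have "((\<lambda>p. F p (p + nat m) / F p p) \<longlongrightarrow> U ^ nat m) sequentially"
    using lim[of "int i" for i] by (intro tendsto_ratio_shift_power[OF step]) (simp add: nat_int_add)
  moreover have "nat (int p + m) = p + nat m" for p using True by simp
  ultimately show ?thesis using True by (simp add: power_int_def)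
next
  case False
  define k where "k = nat (-m)"
  have idx: "\<forall>\<^sub>F p in sequentially. 0 \<le> int p + m"
    using eventually_ge_at_top[of k] by eventually_elim (simp add: k_def nat_le_iff)
  have "((\<lambda>p. W p (nat (int p + m) + i)) \<longlongrightarrow> U) sequentially" for i
    using lim[of "m + int i"] idx
    by (rule Lim_transform_eventually[OF _ eventually_mono]) (simp add: nat_add_distrib flip: add.assoc)
  then have "((\<lambda>p. F p (nat (int p + m) + k) / F p (nat (int p + m))) \<longlongrightarrow> U ^ k) sequentially"
    by (rule tendsto_ratio_shift_power[OF step])
  then have "((\<lambda>p. F p (nat (int p + m)) / F p (nat (int p + m) + k)) \<longlongrightarrow> inverse (U ^ k)) sequentially"
    using \<open>U \<noteq> 0\<close> by (auto dest: tendsto_inverse)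
  moreover have "\<forall>\<^sub>F p in sequentially. nat (int p + m) + k = p"
    using idx by eventually_elim (use False in \<open>simp add: k_def flip: nat_add_distrib\<close>)
  ultimately have "((\<lambda>p. F p (nat (int p + m)) / F p p) \<longlongrightarrow> inverse (U ^ k)) sequentially"
    by (rule Lim_transform_eventually[OF _ eventually_mono]) simp
  then show ?thesis using False by (simp add: k_def power_int_def power_inverse)
qed

definition recX :: "real \<Rightarrow> real \<Rightarrow> complex \<Rightarrow> real \<Rightarrow> nat \<Rightarrow> complex" where
  "recX c d x q n = x - of_real (q^n * (c - d))"

text \<open>\<open>recB c d q n = q^(n-1) c d (1 - q^n)\<close>, written so that \<open>n = 0\<close> gives \<open>0\<close> (for \<open>q \<noteq> 0\<close>)
  instead of a truncated exponent.\<close>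
definition recB :: "real \<Rightarrow> real \<Rightarrow> real \<Rightarrow> nat \<Rightarrow> real" where
  "recB c d q n = q^n * (1 - q^n) * c * d / q"

definition recU :: "real \<Rightarrow> real \<Rightarrow> complex \<Rightarrow> real \<Rightarrow> nat \<Rightarrow> complex" where
  "recU c d x q n = dominant_root (recX c d x q n) (of_real (recB c d q n))"

definition recV :: "real \<Rightarrow> real \<Rightarrow> complex \<Rightarrow> real \<Rightarrow> nat \<Rightarrow> complex" where
  "recV c d x q n = recX c d x q n - recU c d x q n"

fun Pratio :: "real \<Rightarrow> real \<Rightarrow> complex \<Rightarrow> real \<Rightarrow> nat \<Rightarrow> complex" where
  "Pratio c d x q 0 = recX c d x q 0"
| "Pratio c d x q (Suc n) = recX c d x q (Suc n) - of_real (recB c d q (Suc n)) / Pratio c d x q n"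

lemma recU_add_recV: "recU c d x q n + recV c d x q n = recX c d x q n"
  by (simp add: recV_def)

lemma recU_mult_recV: "recU c d x q n * recV c d x q n = of_real (recB c d q n)"
  by (simp add: recV_def recU_def dominant_root_mult)

lemma norm_recV_le: "cmod (recV c d x q n) \<le> cmod (recU c d x q n)"
  by (simp add: recV_def recU_def norm_dominant_root_ge)

lemma Phat_0: "Phat c d q x 0 = 1"
  by (simp add: Phat_def)

lemma Phat_Suc_Suc:
  assumes "0 < q"
  shows "Phat c d q x (Suc (Suc n))
    = recX c d x q (Suc n) * Phat c d q x (Suc n) - of_real (recB c d q (Suc n)) * Phat c d q x n"
proof -
  have "recB c d q (Suc n) = q^n * c * d * (1 - q^Suc n)" using assms by (simp add: recB_def)
  then show ?thesis by (simp add: Phat_def recX_def Let_def case_prod_unfold)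
qed

lemma Phat_Suc_eq_Pratio_mult:
  assumes "0 < q" "\<And>n. Pratio c d x q n \<noteq> 0"
  shows "Phat c d q x (Suc n) = Pratio c d x q n * Phat c d q x n"
proof (induction n)
  case 0
  then show ?case by (simp add: Phat_def recX_def)
next
  case (Suc n)
  then show ?case using assms(2)[of n] by (simp add: Phat_Suc_Suc[OF assms(1)] field_simps)
qed

lemma Phat_ne_zero:
  assumes "0 < q" "\<And>n. Pratio c d x q n \<noteq> 0"
  shows "Phat c d q x n \<noteq> 0"
  using assms(2) by (induction n) (simp_all add: Phat_0 Phat_Suc_eq_Pratio_mult[OF assms])

lemma Pratio_0_eq_recU: "Pratio c d x q 0 = recU c d x q 0"
proof -
  have "recU c d x q 0 * recV c d x q 0 = 0" by (simp add: recU_mult_recV recB_def)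
  then have "recV c d x q 0 = 0" using norm_recV_le[of c d x q 0] by auto
  then show ?thesis using recU_add_recV[of c d x q 0] by simp
qed

lemma recB_nonneg:
  assumes "0 < q" "q \<le> 1" "0 \<le> c" "0 \<le> d"
  shows "0 \<le> recB c d q n"
  using assms by (simp add: recB_def power_le_one)

lemma recB_le:
  assumes "0 < q" "q \<le> 1" "0 \<le> c*d"
  shows "recB c d q n \<le> c*d/q"
proof -
  have "q^n * (1 - q^n) \<le> 1" using assms by (simp add: power_le_one mult_le_one)
  then have "(q^n * (1 - q^n)) * (c*d/q) \<le> 1 * (c*d/q)"
    using assms by (intro mult_right_mono) auto
  then show ?thesis by (simp add: recB_def)
qed

lemma norm_recX_le:
  assumes "0 \<le> q" "q \<le> 1"
  shows "cmod (recX c d x q n) \<le> cmod x + \<bar>c - d\<bar>"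
proof -
  have "cmod (recX c d x q n) \<le> cmod x + \<bar>q^n * (c - d)\<bar>"
    unfolding recX_def using norm_triangle_ineq4[of x] norm_of_real by metis
  also have "\<bar>q^n * (c - d)\<bar> \<le> \<bar>c - d\<bar>"
    using assms by (simp add: abs_mult power_le_one mult_left_le_one_le)
  finally show ?thesis by simp
qed

lemma norm_recX_Suc_diff_le:
  assumes "0 \<le> q" "q \<le> 1"
  shows "cmod (recX c d x q (Suc n) - recX c d x q n) \<le> \<bar>c - d\<bar> * (1 - q)"
proof -
  have "recX c d x q (Suc n) - recX c d x q n = of_real (q^n * (1 - q) * (c - d))"
    by (simp add: recX_def algebra_simps)
  moreover have "\<bar>q^n * (1 - q) * (c - d)\<bar> = q^n * (1 - q) * \<bar>c - d\<bar>"
    using assms by (simp add: abs_mult)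
  moreover have "q^n * (1 - q) * \<bar>c - d\<bar> \<le> (1 - q) * \<bar>c - d\<bar>"
    using assms by (intro mult_right_mono) (simp_all add: power_le_one mult_left_le_one_le)
  ultimately show ?thesis by (simp only: norm_of_real mult.commute)
qed

lemma abs_recB_Suc_diff_le:
  assumes "0 < q" "q \<le> 1" "0 \<le> c*d"
  shows "\<bar>recB c d q (Suc n) - recB c d q n\<bar> \<le> c*d/q * (1 - q)"
proof -
  have B_eq: "recB c d q m = c*d/q * (q^m * (1 - q^m))" for m by (simp add: recB_def)
  have "q^Suc n * (1 - q^Suc n) - q^n * (1 - q^n) = q^n * (1 - q) * (q^Suc n + q^n - 1)"
    by (simp add: algebra_simps)
  then have "recB c d q (Suc n) - recB c d q n = c*d/q * (q^n * (1 - q) * (q^Suc n + q^n - 1))"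
    by (simp only: B_eq flip: right_diff_distrib)
  moreover have "\<bar>q^n * (1 - q) * (q^Suc n + q^n - 1)\<bar> \<le> (1 - q) * 1"
  proof -
    have pw: "0 \<le> q^n" "q^n \<le> 1" "0 \<le> q^Suc n" "q^Suc n \<le> 1"
      using assms by (simp_all add: power_le_one del: power_Suc)
    then have "\<bar>q^Suc n + q^n - 1\<bar> \<le> 1" unfolding abs_le_iff by linarith
    moreover have "q^n * (1 - q) \<le> 1 - q" "0 \<le> q^n * (1 - q)"
      using assms pw by (simp_all add: mult_left_le_one_le)
    ultimately show ?thesis by (simp only: abs_mult) (intro mult_mono; simp)
  qed
  moreover have "0 \<le> c*d/q" using assms by simp
  ultimately show ?thesis by (simp only: abs_mult abs_of_nonneg mult_1_right mult_left_mono)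
qed

lemma eventually_le_of_tendsto_zero:
  fixes f :: "'a \<Rightarrow> real"
  assumes "(f \<longlongrightarrow> 0) F" "0 < \<epsilon>"
  shows "\<forall>\<^sub>F p in F. f p \<le> \<epsilon>"
  using order_tendstoD(2)[OF assms] by (rule eventually_mono) simp

context separated
begin

lemma recU_gap:
  assumes "0 < q" "q \<le> 1" "(1/q - 1) * c * d \<le> g^2"
  shows "g \<le> cmod (recU c d x q n) - cmod (recV c d x q n)"
proof (rule root_gap)
  show "recU c d x q n * recV c d x q n = of_real (1/q * q^n * (1 - q^n) * c * d)"
    by (simp add: recU_mult_recV recB_def)
  show "recU c d x q n + recV c d x q n = x - of_real (q^n * (c - d))"
    by (simp add: recU_add_recV recX_def)
qed (use assms in \<open>simp_all add: power_le_one norm_recV_le\<close>)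

lemma norm_recU_le:
  assumes "0 < q" "q \<le> 1" "(1/q - 1) * c * d \<le> g^2"
  shows "cmod (recU c d x q n) \<le> cmod x + \<bar>c - d\<bar> + c*d/(q*g)"
proof -
  have cd: "0 \<le> c*d" using c_pos d_pos by simp
  have "g \<le> cmod (recU c d x q n)"
    using recU_gap[OF assms, of n] norm_ge_zero[of "recV c d x q n"] by linarith
  with g_pos have "cmod (recU c d x q n) \<le> cmod (recX c d x q n) + recB c d q n / g"
    using c_pos d_pos assms
    by (intro norm_root_le[OF recU_add_recV recU_mult_recV recB_nonneg]) simp_all
  also have "recB c d q n / g \<le> (c*d/q) / g"
    using recB_le[OF assms(1,2) cd] g_pos by (intro divide_right_mono) auto
  finally show ?thesis using norm_recX_le[of q c d x n] assms by simp
qed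

lemma norm_recU_Suc_diff_le:
  assumes q: "0 < q" "q \<le> 1" "(1/q - 1) * c * d \<le> g^2"
    and M: "\<And>n. cmod (recU c d x q n) \<le> M"
    and \<epsilon>_def: "\<epsilon> \<equiv> (1 - q) * (\<bar>c - d\<bar> * M + c*d/q)"
    and small: "\<bar>c - d\<bar> * (1 - q) \<le> g/4" "\<epsilon> \<le> g^2/8"
  shows "cmod (recU c d x q n - recU c d x q (Suc n)) \<le> 2*\<epsilon>/g"
proof -
  have "cmod (recX c d x q (Suc n) - recX c d x q n) * cmod (recU c d x q n)
      \<le> (\<bar>c - d\<bar> * (1 - q)) * M"
    using norm_recX_Suc_diff_le[of q c d x n] M[of n] q by (intro mult_mono) auto
  moreover have "\<bar>recB c d q (Suc n) - recB c d q n\<bar> \<le> c*d/q * (1 - q)"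
    using abs_recB_Suc_diff_le q c_pos d_pos by simp
  ultimately have "cmod (recX c d x q (Suc n) - recX c d x q n) * cmod (recU c d x q n)
      + \<bar>recB c d q (Suc n) - recB c d q n\<bar> \<le> \<epsilon>"
    by (simp add: \<epsilon>_def algebra_simps)
  then have "cmod (recU c d x q (Suc n) - recU c d x q n) \<le> 2*\<epsilon>/g"
    using norm_recX_Suc_diff_le[of q c d x n] q small
    by (intro norm_diff_larger_roots_le[OF recU_add_recV recU_mult_recV recU_add_recV recU_mult_recV
          g_pos recU_gap[OF q] recU_gap[OF q]]) simp_all
  then show ?thesis by (simp add: norm_minus_commute)
qed

lemma norm_Pratio_sub_recU_le:
  assumes q: "0 < q" "q \<le> 1" "(1/q - 1) * c * d \<le> g^2"
    and M: "\<And>n. cmod (recU c d x q n) \<le> M"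
    and \<epsilon>_def: "\<epsilon> \<equiv> (1 - q) * (\<bar>c - d\<bar> * M + c*d/q)"
    and small: "\<bar>c - d\<bar> * (1 - q) \<le> g/4" "\<epsilon> \<le> g^2/8" "2*\<epsilon>/g \<le> g/4" "(2*M/g) * (2*\<epsilon>/g) \<le> g/4"
  shows "cmod (Pratio c d x q n - recU c d x q n) \<le> (2*M/g) * (2*\<epsilon>/g)"
proof (rule continued_fraction_tracks_root)
  have "0 \<le> M" using M[of 0] norm_ge_zero order_trans by blast
  then show "0 \<le> 2*\<epsilon>/g" using q c_pos d_pos g_pos by (simp add: \<epsilon>_def)
  show "cmod (recU c d x q n - recU c d x q (Suc n)) \<le> 2*\<epsilon>/g" for n
    using norm_recU_Suc_diff_le[OF q M \<epsilon>_def small(1,2)] .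
qed (use recU_add_recV recU_mult_recV recU_gap[OF q] g_pos M small(3,4) Pratio_0_eq_recU in auto)

lemma eventually_root_gap_condition:
  assumes "(q \<longlongrightarrow> 1) sequentially"
  shows "\<forall>\<^sub>F p in sequentially. (1/q p - 1) * c * d \<le> g^2"
proof -
  have "((\<lambda>p. (1/q p - 1) * c * d) \<longlongrightarrow> (1/1 - 1)*c*d) sequentially"
    by (intro tendsto_intros assms) simp
  then show ?thesis using g_pos by (simp add: eventually_le_of_tendsto_zero)
qed

lemma Pratio_uniformly_near_recU:
  assumes q: "(q \<longlongrightarrow> 1) sequentially" "\<forall>\<^sub>F p in sequentially. r \<le> q p \<and> q p \<le> 1" and "0 < r"
  shows "\<exists>e. (e \<longlongrightarrow> 0) sequentially \<and>
    (\<forall>\<^sub>F p in sequentially. \<forall>n. cmod (Pratio c d x (q p) n - recU c d x (q p) n) \<le> e p)"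
proof -
  define M where "M = cmod x + \<bar>c - d\<bar> + c*d/(r*g)"
  define \<epsilon> where "\<epsilon> p = (1 - q p) * (\<bar>c - d\<bar> * M + c*d/q p)" for p
  have "((\<lambda>p. \<bar>c - d\<bar> * (1 - q p)) \<longlongrightarrow> \<bar>c - d\<bar> * (1 - 1)) sequentially"
    by (intro tendsto_intros q)
  then have small_X: "\<forall>\<^sub>F p in sequentially. \<bar>c - d\<bar> * (1 - q p) \<le> g/4"
    using g_pos by (simp add: eventually_le_of_tendsto_zero)
  have "(\<epsilon> \<longlongrightarrow> (1 - 1) * (\<bar>c - d\<bar> * M + c*d/1)) sequentially"
    unfolding \<epsilon>_def by (intro tendsto_intros q) simp
  then have "(\<epsilon> \<longlongrightarrow> 0) sequentially" by simp
  then have lim_\<epsilon>: "((\<lambda>p. 2*\<epsilon> p/g) \<longlongrightarrow> 0) sequentially"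
      "((\<lambda>p. (2*M/g) * (2*\<epsilon> p/g)) \<longlongrightarrow> 0) sequentially"
    by (intro tendsto_mult_right_zero tendsto_divide_zero; assumption)+
  have small_\<epsilon>: "\<forall>\<^sub>F p in sequentially. \<epsilon> p \<le> g^2/8 \<and> 2*\<epsilon> p/g \<le> g/4 \<and> (2*M/g) * (2*\<epsilon> p/g) \<le> g/4"
    using eventually_le_of_tendsto_zero[OF \<open>(\<epsilon> \<longlongrightarrow> 0) sequentially\<close>, of "g^2/8"]
      eventually_le_of_tendsto_zero[OF lim_\<epsilon>(1), of "g/4"]
      eventually_le_of_tendsto_zero[OF lim_\<epsilon>(2), of "g/4"] g_pos
    by (simp add: eventually_conj_iff)
  have "\<forall>\<^sub>F p in sequentially. \<forall>n. cmod (Pratio c d x (q p) n - recU c d x (q p) n) \<le> (2*M/g) * (2*\<epsilon> p/g)"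
    using q(2) eventually_root_gap_condition[OF q(1)] small_X small_\<epsilon>
  proof eventually_elim
    case (elim p)
    then have qp: "0 < q p" "q p \<le> 1" "(1/q p - 1) * c * d \<le> g^2" using \<open>0 < r\<close> by auto
    have "c*d/(q p * g) \<le> c*d/(r*g)"
      using elim \<open>0 < r\<close> c_pos d_pos g_pos by (intro divide_left_mono mult_right_mono) auto
    then have "cmod (recU c d x (q p) n) \<le> M" for n
      using norm_recU_le[OF qp, of n] by (simp add: M_def)
    then show ?case
      using elim by (intro allI norm_Pratio_sub_recU_le[OF qp]) (simp_all add: \<epsilon>_def)
  qed
  with lim_\<epsilon>(2) show ?thesis by blast
qed

lemma eventually_Pratio_ne_zero:
  assumes q: "(q \<longlongrightarrow> 1) sequentially" "\<forall>\<^sub>F p in sequentially. r \<le> q p \<and> q p \<le> 1" and "0 < r"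
  shows "\<forall>\<^sub>F p in sequentially. \<forall>n. Pratio c d x (q p) n \<noteq> 0"
proof -
  obtain e where "(e \<longlongrightarrow> 0) sequentially"
    and near: "\<forall>\<^sub>F p in sequentially. \<forall>n. cmod (Pratio c d x (q p) n - recU c d x (q p) n) \<le> e p"
    using Pratio_uniformly_near_recU[OF assms] by blast
  then have "\<forall>\<^sub>F p in sequentially. e p < g" using g_pos order_tendstoD(2) by blast
  with near q(2) eventually_root_gap_condition[OF q(1)] show ?thesis
  proof eventually_elim
    case (elim p)
    show ?case
    proof
      fix n
      have "0 < q p" "q p \<le> 1" using elim \<open>0 < r\<close> by auto
      then have "g \<le> cmod (recU c d x (q p) n) - cmod (recV c d x (q p) n)"
        using elim by (intro recU_gap) auto
      then have "g \<le> cmod (recU c d x (q p) n)" using norm_ge_zero[of "recV c d x (q p) n"] by linarith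
      moreover have "cmod (Pratio c d x (q p) n - recU c d x (q p) n) < g"
        using elim by (blast intro: le_less_trans)
      ultimately show "Pratio c d x (q p) n \<noteq> 0" by auto
    qed
  qed
qed

lemma limit_root_gap:
  assumes "0 \<le> s" "s \<le> 1"
  defines "X \<equiv> x - of_real (s * (c - d))"
  shows "g \<le> cmod (dominant_root X (of_real (s * (1 - s) * c * d)))
    - cmod (X - dominant_root X (of_real (s * (1 - s) * c * d)))"
  using assms c_pos d_pos
  by (intro root_gap[of s 1]) (simp_all add: dominant_root_mult norm_dominant_root_ge)

lemma recU_tendsto:
  assumes q: "(q \<longlongrightarrow> 1) sequentially" "\<forall>\<^sub>F p in sequentially. 0 < q p \<and> q p \<le> 1"
    and s: "((\<lambda>p. q p ^ n p) \<longlongrightarrow> s) sequentially" "0 \<le> s" "s \<le> 1"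
  shows "((\<lambda>p. recU c d x (q p) (n p))
    \<longlongrightarrow> dominant_root (x - of_real (s * (c - d))) (of_real (s * (1 - s) * c * d))) sequentially"
proof -
  define X where "X = x - of_real (s * (c - d))"
  define B where "B = s * (1 - s) * c * d"
  define U where "U = dominant_root X (of_real B)"
  have roots: "U + (X - U) = X" "U * (X - U) = of_real B" by (simp_all add: U_def dominant_root_mult)
  have gap: "g \<le> cmod U - cmod (X - U)"
    using limit_root_gap[OF s(2,3)] by (simp add: U_def X_def B_def)
  have lim_X: "((\<lambda>p. recX c d x (q p) (n p)) \<longlongrightarrow> X) sequentially"
    unfolding recX_def X_def by (intro tendsto_intros s)
  have "((\<lambda>p. recB c d (q p) (n p)) \<longlongrightarrow> s * (1 - s) * c * d / 1) sequentially"
    unfolding recB_def by (intro tendsto_intros s q) simp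
  then have lim_B: "((\<lambda>p. recB c d (q p) (n p)) \<longlongrightarrow> B) sequentially" by (simp add: B_def)
  define \<epsilon> where "\<epsilon> p = cmod (recX c d x (q p) (n p) - X) * cmod U + \<bar>recB c d (q p) (n p) - B\<bar>" for p
  have "(\<epsilon> \<longlongrightarrow> cmod (X - X) * cmod U + \<bar>B - B\<bar>) sequentially"
    unfolding \<epsilon>_def by (intro tendsto_intros lim_X lim_B)
  then have "(\<epsilon> \<longlongrightarrow> 0) sequentially" by simp
  moreover have "((\<lambda>p. cmod (recX c d x (q p) (n p) - X)) \<longlongrightarrow> cmod (X - X)) sequentially"
    by (intro tendsto_intros lim_X)
  ultimately have "\<forall>\<^sub>F p in sequentially. cmod (recX c d x (q p) (n p) - X) \<le> g/4 \<and> \<epsilon> p \<le> g^2/8"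
    using g_pos by (simp add: eventually_conj_iff eventually_le_of_tendsto_zero)
  then have "\<forall>\<^sub>F p in sequentially. cmod (recU c d x (q p) (n p) - U) \<le> 2*\<epsilon> p/g"
    using q(2) eventually_root_gap_condition[OF q(1)]
  proof eventually_elim
    case (elim p)
    then have "0 < q p" "q p \<le> 1" "(1/q p - 1) * c * d \<le> g^2" by auto
    with elim show ?case
      by (intro norm_diff_larger_roots_le[OF recU_add_recV recU_mult_recV roots g_pos recU_gap gap])
        (simp_all add: \<epsilon>_def)
  qed
  moreover have "((\<lambda>p. 2*\<epsilon> p/g) \<longlongrightarrow> 0) sequentially"
    using \<open>(\<epsilon> \<longlongrightarrow> 0) sequentially\<close> by (auto intro: tendsto_divide_zero tendsto_mult_right_zero)
  ultimately have "((\<lambda>p. recU c d x (q p) (n p) - U) \<longlongrightarrow> 0) sequentially"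
    by (rule Lim_null_comparison)
  then show ?thesis by (simp add: LIM_zero_iff U_def X_def B_def)
qed

lemma Pratio_tendsto:
  assumes q: "(q \<longlongrightarrow> 1) sequentially" "\<forall>\<^sub>F p in sequentially. r \<le> q p \<and> q p \<le> 1" "0 < r"
    and s: "((\<lambda>p. q p ^ n p) \<longlongrightarrow> s) sequentially" "0 \<le> s" "s \<le> 1"
  shows "((\<lambda>p. Pratio c d x (q p) (n p))
    \<longlongrightarrow> dominant_root (x - of_real (s * (c - d))) (of_real (s * (1 - s) * c * d))) sequentially"
proof (rule Lim_transform)
  have "\<forall>\<^sub>F p in sequentially. 0 < q p \<and> q p \<le> 1" using q(2,3) by (auto elim: eventually_mono)
  then show "((\<lambda>p. recU c d x (q p) (n p))
      \<longlongrightarrow> dominant_root (x - of_real (s * (c - d))) (of_real (s * (1 - s) * c * d))) sequentially"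
    using recU_tendsto[OF q(1) _ s] by blast
  obtain e where "(e \<longlongrightarrow> 0) sequentially"
    and "\<forall>\<^sub>F p in sequentially. \<forall>n. cmod (Pratio c d x (q p) n - recU c d x (q p) n) \<le> e p"
    using Pratio_uniformly_near_recU[OF q] by blast
  then have "\<forall>\<^sub>F p in sequentially. cmod (Pratio c d x (q p) (n p) - recU c d x (q p) (n p)) \<le> e p"
    by (auto elim: eventually_mono)
  then show "((\<lambda>p. Pratio c d x (q p) (n p) - recU c d x (q p) (n p)) \<longlongrightarrow> 0) sequentially"
    using \<open>(e \<longlongrightarrow> 0) sequentially\<close> by (rule Lim_null_comparison)
qed

lemma Phat_shift_ratio_tendsto:
  assumes q: "(q \<longlongrightarrow> 1) sequentially" "\<forall>\<^sub>F p in sequentially. r \<le> q p \<and> q p \<le> 1" "0 < r"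
    and s: "\<And>j. ((\<lambda>p. q p ^ nat (int p + j)) \<longlongrightarrow> s) sequentially" "0 \<le> s" "s \<le> 1"
  shows "((\<lambda>p. Phat c d (q p) x (nat (int p + m)) / Phat c d (q p) x p)
    \<longlongrightarrow> dominant_root (x - of_real (s * (c - d))) (of_real (s * (1 - s) * c * d)) powi m) sequentially"
proof (rule tendsto_shift_ratio_powi)
  show "\<forall>\<^sub>F p in sequentially. \<forall>n.
      Phat c d (q p) x (Suc n) = Pratio c d x (q p) n * Phat c d (q p) x n \<and> Phat c d (q p) x n \<noteq> 0"
    using eventually_Pratio_ne_zero[OF q] q(2)
  proof eventually_elim
    case (elim p)
    then have "0 < q p" using q(3) by linarith
    with elim show ?case by (simp add: Phat_Suc_eq_Pratio_mult Phat_ne_zero)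
  qed
  show "((\<lambda>p. Pratio c d x (q p) (nat (int p + j)))
      \<longlongrightarrow> dominant_root (x - of_real (s * (c - d))) (of_real (s * (1 - s) * c * d))) sequentially" for j
    using s by (intro Pratio_tendsto[OF q]) auto
  show "dominant_root (x - of_real (s * (c - d))) (of_real (s * (1 - s) * c * d)) \<noteq> 0"
    using limit_root_gap[OF s(2,3)] g_pos by (smt (verit) norm_ge_zero norm_zero)
qed

end

lemma exists_separated:
  assumes "0 < c" "0 < d" "x \<notin> complex_of_real ` {-d..c}"
  shows "\<exists>g. separated c d x g"
proof -
  have "closed (complex_of_real ` {-d..c})"
    by (intro compact_imp_closed compact_continuous_image continuous_on_of_real_id compact_Icc)
  then obtain e where e: "0 < e" "\<forall>z\<in>complex_of_real ` {-d..c}. e \<le> dist x z"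
    using separate_point_closed[OF _ assms(3)] by auto
  have "e/2 \<le> cmod (x - of_real y)" if y: "y \<in> {-d - e/2..c + e/2}" for y
  proof -
    define y' where "y' = max (-d) (min c y)"
    have "y' \<in> {-d..c}" "\<bar>y - y'\<bar> \<le> e/2"
      using y assms(1,2) e(1) by (simp_all add: y'_def max_def min_def)
    then have "e \<le> cmod (x - of_real y')" using e(2) by (simp add: dist_norm)
    also have "\<dots> \<le> cmod (x - of_real y) + cmod (of_real (y - y') :: complex)"
      using norm_triangle_ineq[of "x - of_real y" "of_real (y - y')"] by simp
    also have "cmod (of_real (y - y') :: complex) = \<bar>y - y'\<bar>" by (rule norm_of_real)
    finally show ?thesis using \<open>\<bar>y - y'\<bar> \<le> e/2\<close> by simp
  qed
  then have "separated c d x (e/2)" using assms(1,2) e(1) by unfold_locales auto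
  then show ?thesis ..
qed

lemma tendsto_root_powr_one: "0 < r \<Longrightarrow> ((\<lambda>p. r powr (1 / real p)) \<longlongrightarrow> 1) sequentially"
  using tendsto_powr[OF tendsto_const lim_inverse_n', of r] by simp

lemma eventually_root_powr_bounds:
  assumes "0 < r" "r < 1"
  shows "\<forall>\<^sub>F p in sequentially. r \<le> r powr (1 / real p) \<and> r powr (1 / real p) \<le> 1"
  using eventually_gt_at_top[of 0]
proof eventually_elim
  case (elim p)
  then have "r powr 1 \<le> r powr (1 / real p)" using assms by (intro powr_mono') auto
  then show ?case using assms by (simp add: powr_le1)
qed

lemma tendsto_root_powr_shift_power:
  assumes "0 < r"
  shows "((\<lambda>p. (r powr (1 / real p)) ^ nat (int p + j)) \<longlongrightarrow> r) sequentially"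
proof -
  have "\<forall>\<^sub>F p in sequentially. r powr (1 + real_of_int j / real p) = (r powr (1 / real p)) ^ nat (int p + j)"
    using eventually_ge_at_top[of "nat \<bar>j\<bar> + 1"]
  proof eventually_elim
    case (elim p)
    then have "real (nat (int p + j)) * (1 / real p) = 1 + real_of_int j / real p"
      by (simp add: field_simps)
    then show ?case using assms by (simp add: powr_power)
  qed
  moreover have "((\<lambda>p. r powr (1 + real_of_int j / real p)) \<longlongrightarrow> r powr (1 + 0)) sequentially"
    using assms by (intro tendsto_powr tendsto_intros) auto
  ultimately show ?thesis using assms by (simp add: Lim_transform_eventually)
qed

lemma norm_gt_1_of_mult_eq_1:
  fixes w w' :: "'a::real_normed_field"
  assumes "w * w' = 1" "norm w' < norm w"
  shows "1 < norm w" "norm w' < 1"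
proof -
  have "norm w * norm w' = 1" using assms(1) norm_mult[of w w'] by simp
  then have "0 < norm w" by (cases "w = 0") auto
  then have w': "norm w' = 1 / norm w"
    using \<open>norm w * norm w' = 1\<close> by (simp add: eq_divide_eq mult.commute)
  then have "1 < norm w * norm w" using assms(2) \<open>0 < norm w\<close> by (simp add: divide_less_eq)
  then show "1 < norm w" by (metis mult_le_one norm_ge_zero not_le)
  then show "norm w' < 1" using \<open>0 < norm w\<close> by (simp add: w' divide_less_eq)
qed

text \<open>\<open>U/\<surd>B\<close> and \<open>(X - U)/\<surd>B\<close> are the two solutions \<open>y \<plusminus> \<surd>(y\<^sup>2 - 1)\<close> of \<open>w + 1/w = 2y\<close>,
  and the gap selects the one outside the unit circle.\<close>
lemma rho_eq_dominant_root:
  assumes B: "0 < B" and gap: "cmod (X - dominant_root X (of_real B)) < cmod (dominant_root X (of_real B))"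
  shows "rho (X / of_real (2 * sqrt B)) = dominant_root X (of_real B) / of_real (sqrt B)"
proof -
  define \<beta> where "\<beta> = sqrt B"
  define U where "U = dominant_root X (of_real B)"
  define y where "y = X / of_real (2 * \<beta>)"
  define w where "w = U / of_real \<beta>"
  define w' where "w' = (X - U) / of_real \<beta>"
  have \<beta>: "0 < \<beta>" "\<beta> * \<beta> = B" using B by (simp_all add: \<beta>_def)
  have sum: "w + w' = 2 * y" using \<beta> by (simp add: w_def w'_def y_def field_simps)
  have "w * w' = U * (X - U) / (of_real \<beta> * of_real \<beta>)" by (simp add: w_def w'_def)
  also have "\<dots> = 1" using B \<beta> dominant_root_mult[of X "of_real B"] by (simp add: U_def flip: of_real_mult)
  finally have prod: "w * w' = 1" .
  have "cmod w' < cmod w" using gap \<beta> unfolding w_def w'_def U_def norm_divide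
    by (intro divide_strict_right_mono) auto
  then have "1 < cmod w" "cmod w' < 1" by (rule norm_gt_1_of_mult_eq_1[OF prod])+
  have "rho y = w"
    unfolding rho_def
  proof (rule the_equality)
    have "(w - y)^2 = y^2 - 1" using sum prod by algebra
    then show "\<exists>s. s^2 = y^2 - 1 \<and> w = y + s \<and> 1 < cmod w"
      using \<open>1 < cmod w\<close> by (intro exI[of _ "w - y"]) simp
  next
    fix z assume "\<exists>s. s^2 = y^2 - 1 \<and> z = y + s \<and> 1 < cmod z"
    then obtain s where s: "s^2 = y^2 - 1" "z = y + s" "1 < cmod z" by blast
    have "(z - w) * (z - w') = (z - y)^2 - y^2 + w * w'"
      using sum by algebra
    also have "\<dots> = 0" using s prod by simp
    finally show "z = w" using s(3) \<open>cmod w' < 1\<close> by auto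
  qed
  then show ?thesis by (simp add: y_def w_def U_def \<beta>_def)
qed

lemma dominant_root_powi_eq_rho:
  assumes "0 < B" "cmod (X - dominant_root X (of_real B)) < cmod (dominant_root X (of_real B))"
  shows "dominant_root X (of_real B) powi m
    = of_real (B powr (real_of_int m / 2)) * rho (X / of_real (2 * sqrt B)) powi m"
proof -
  have "B powr (real_of_int m / 2) = (B powr (1/2)) powr real_of_int m" by (simp add: powr_powr)
  also have "\<dots> = sqrt B powi m" using assms by (simp add: powr_half_sqrt powr_real_of_int')
  finally show ?thesis
    using rho_eq_dominant_root[OF assms] assms(1) by (simp add: power_int_divide_distrib)
qed

theorem mainTheorem8:
  fixes c d r :: real and m :: int and x :: complex
  assumes "c > 0" and "d > 0" and "0 < r" and "r < 1"
    and "x \<notin> complex_of_real ` {-d..c}"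
  shows "(\<lambda>p::nat. Phat c d (r powr (1 / real p)) x (nat (int p + m))
                 / Phat c d (r powr (1 / real p)) x p)
         \<longlonglongrightarrow> complex_of_real ((c * d * r * (1 - r)) powr (real_of_int m / 2))
             * (rho ((x - complex_of_real (r * (c - d)))
                      / complex_of_real (2 * sqrt (r * c * d * (1 - r))))) powi m"
proof -
  obtain g where "separated c d x g" using exists_separated assms(1,2,5) by blast
  then interpret separated c d x g .
  define X where "X = x - of_real (r * (c - d))"
  define B where "B = r * (1 - r) * c * d"
  have "((\<lambda>p. Phat c d (r powr (1 / real p)) x (nat (int p + m)) / Phat c d (r powr (1 / real p)) x p)
      \<longlonglongrightarrow> dominant_root X (of_real B) powi m)"
    unfolding X_def B_def using assms(3,4)
    by (intro Phat_shift_ratio_tendsto[where q = "\<lambda>p. r powr (1 / real p)" and r = r and s = r]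
        tendsto_root_powr_one eventually_root_powr_bounds tendsto_root_powr_shift_power) auto
  moreover have "dominant_root X (of_real B) powi m
      = of_real (B powr (real_of_int m / 2)) * rho (X / of_real (2 * sqrt B)) powi m"
    using limit_root_gap[of r] g_pos assms(1-4)
    by (intro dominant_root_powi_eq_rho) (auto simp: X_def B_def)
  moreover have "c * d * r * (1 - r) = B" "r * c * d * (1 - r) = B" by (simp_all add: B_def)
  ultimately show ?thesis by (simp add: X_def)
qed

end
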